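(* Let $M,N\in\mathbb N$ and let $\mathcal Q\in\mathbb M_{\mathrm{TS}}$. Then for every T-junction $v\in\mathsf T(\mathcal Q)$ there is a unique element $Q_v\in\mathcal Q$ with $v\in\mathsf T(Q_v)$. Moreover, the sets $\mathsf T_{\mathrm h}(\mathcal Q)$ and $\mathsf T_{\mathrm v}(\mathcal Q)$ are disjoint and $\mathsf T_{\mathrm h}(\mathcal Q)\cup\mathsf T_{\mathrm v}(\mathcal Q)=\mathsf T(\mathcal Q)$.
   Context: Let $\mathcal Q_0=\{[m-1,m]\times[n-1,n]: m\in\{1,\dots,M\},\ n\in\{1,\dots,N\}\}$. For a rectangle $Q=[x,x+\tilde x]\times[y,y+\tilde y]$, $j\in\{1,2\}$ and $0<q<1$, define $\mathrm{bisect}_{j,q}(Q)=\{[x,x+q\tilde x]\times[y,y+\tilde y],\ [x+q\tilde x,x+\tilde x]\times[y,y+\tilde y]\}$ if $j=1$ and $\mathrm{bisect}_{j,q}(Q)=\{[x,x+\tilde x]\times[y,y+q\tilde y],\ [x,x+\tilde x]\times[y+q\tilde y,y+\tilde y]\}$ if $j=2$. The mesh class $\mathbb M_{\mathrm{TS}}$ is the smallest set of finite sets of closed rectangles such that $\mathcal Q_0\in\mathbb M_{\mathrm{TS}}$ and, whenever $\mathcal Q\in\mathbb M_{\mathrm{TS}}$, $Q\in\mathcal Q$, $j\in\{1,2\}$, $0<q<1$, also $(\mathcal Q\setminus\{Q\})\cup\mathrm{bisect}_{j,q}(Q)\in\mathbb M_{\mathrm{TS}}$. For $Q=[x,x+\tilde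 x]\times[y,y+\tilde y]$ define the vertex set $\mathsf V(Q)=\{x,x+\tilde x\}\times\{y,y+\tilde y\}$, the vertical sides $\mathrm{vsk}(Q)=\{x,x+\tilde x\}\times[y,y+\tilde y]$ and horizontal sides $\mathrm{hsk}(Q)=[x,x+\tilde x]\times\{y,y+\tilde y\}$. For a mesh $\mathcal Q$, $\mathsf V(\mathcal Q)=\bigcup_{Q\in\mathcal Q}\mathsf V(Q)$; for $Q\in\mathcal Q$, $\mathsf T(Q)=(\mathsf V(\mathcal Q)\cap Q)\setminus\mathsf V(Q)$ and $\mathsf T(\mathcal Q)=\bigcup_{Q\in\mathcal Q}\mathsf T(Q)$ (T-junctions). Further $\mathsf T_{\mathrm h}(Q)=\{v\in\mathsf T(Q): v\in\mathrm{vsk}(Q)\}$, $\mathsf T_{\mathrm v}(Q)=\{v\in\mathsf T(Q): v\in\mathrm{hsk}(Q)\}$, $\mathsf T_{\mathrm h}(\mathcal Q)=\bigcup_{Q\in\mathcal Q}\mathsf T_{\mathrm h}(Q)$, $\mathsf T_{\mathrm v}(\mathcal Q)=\bigcup_{Q\in\mathcal Q}\mathsf T_{\mathrm v}(Q)$. *)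

theory Defs
  imports Main "HOL.Real"
begin

text \<open>A closed rectangle [x, x + a] \<times> [y, y + b] is encoded by its parameters (x, a, y, b).\<close>
type_synonym rect = "real \<times> real \<times> real \<times> real"

fun rect_pts :: "rect \<Rightarrow> (real \<times> real) set" where
  "rect_pts (x, a, y, b) = {x..x+a} \<times> {y..y+b}"

definition Q0 :: "nat \<Rightarrow> nat \<Rightarrow> rect set" where
  "Q0 M N = {(real m - 1, 1, real n - 1, 1) | m n. m \<in> {1..M} \<and> n \<in> {1..N}}"

fun bisect :: "nat \<Rightarrow> real \<Rightarrow> rect \<Rightarrow> rect set" where
  "bisect j q (x, a, y, b) =
     (if j = 1 then {(x, q*a, y, b), (x + q*a, a - q*a, y, b)}
      else {(x, a, y, q*b), (x, a, y + q*b, b - q*b)})"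

inductive_set MTS :: "nat \<Rightarrow> nat \<Rightarrow> rect set set" for M N where
  base: "Q0 M N \<in> MTS M N"
| step: "\<lbrakk>Qs \<in> MTS M N; Q \<in> Qs; j \<in> {1,2}; 0 < q; q < 1\<rbrakk>
         \<Longrightarrow> (Qs - {Q}) \<union> bisect j q Q \<in> MTS M N"

fun verts :: "rect \<Rightarrow> (real \<times> real) set" where
  "verts (x, a, y, b) = {x, x+a} \<times> {y, y+b}"

fun vsk :: "rect \<Rightarrow> (real \<times> real) set" where
  "vsk (x, a, y, b) = {x, x+a} \<times> {y..y+b}"

fun hsk :: "rect \<Rightarrow> (real \<times> real) set" where
  "hsk (x, a, y, b) = {x..x+a} \<times> {y, y+b}"

definition meshV :: "rect set \<Rightarrow> (real \<times> real) set" where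
  "meshV Qs = (\<Union>Q\<in>Qs. verts Q)"

definition TQ :: "rect set \<Rightarrow> rect \<Rightarrow> (real \<times> real) set" where
  "TQ Qs Q = (meshV Qs \<inter> rect_pts Q) - verts Q"

definition Tmesh :: "rect set \<Rightarrow> (real \<times> real) set" where
  "Tmesh Qs = (\<Union>Q\<in>Qs. TQ Qs Q)"

definition ThQ :: "rect set \<Rightarrow> rect \<Rightarrow> (real \<times> real) set" where
  "ThQ Qs Q = {v \<in> TQ Qs Q. v \<in> vsk Q}"

definition TvQ :: "rect set \<Rightarrow> rect \<Rightarrow> (real \<times> real) set" where
  "TvQ Qs Q = {v \<in> TQ Qs Q. v \<in> hsk Q}"

definition Th_mesh :: "rect set \<Rightarrow> (real \<times> real) set" where
  "Th_mesh Qs = (\<Union>Q\<in>Qs. ThQ Qs Q)"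

definition Tv_mesh :: "rect set \<Rightarrow> (real \<times> real) set" where
  "Tv_mesh Qs = (\<Union>Q\<in>Qs. TvQ Qs Q)"

end

theory Submission
  imports Defs Complex_Main
begin

text \<open>
  Every mesh of the class is a family of non-degenerate rectangles with pairwise disjoint interiors,
  and this is all that is needed. Near a point v, a rectangle Q occupies the open quadrant in a
  diagonal direction d if v + t d lies in the interior of Q for all small t > 0; by disjointness each
  quadrant is occupied by at most one rectangle. A rectangle occupies at least one quadrant at each of
  its vertices, all four at an interior point, and a half-plane (two adjacent quadrants) at a point of
  a side that is not a vertex. A T-junction v of Q is a vertex of some other rectangle R, so v cannot
  be interior to Q; hence Q occupies a half-plane at v. Two different rectangles with v as T-junction
  would occupy disjoint half-planes, i.e. all four quadrants, leaving none for R. Since the sides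
  of Q meet only in its vertices, the horizontal/vertical classification then follows.
\<close>

fun open_rect :: "rect \<Rightarrow> (real \<times> real) set" where
  "open_rect (x, a, y, b) = {x<..<x+a} \<times> {y<..<y+b}"

definition proper_mesh :: "rect set \<Rightarrow> bool" where
  "proper_mesh Qs \<longleftrightarrow> (\<forall>(x, a, y, b)\<in>Qs. 0 < a \<and> 0 < b) \<and>
     (\<forall>A\<in>Qs. \<forall>B\<in>Qs. A \<noteq> B \<longrightarrow> open_rect A \<inter> open_rect B = {})"

lemma proper_meshD:
  assumes "proper_mesh Qs"
  shows "(x, a, y, b) \<in> Qs \<Longrightarrow> 0 < a \<and> 0 < b"
    and "A \<in> Qs \<Longrightarrow> B \<in> Qs \<Longrightarrow> A \<noteq> B \<Longrightarrow> open_rect A \<inter> open_rect B = {}"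
  using assms unfolding proper_mesh_def by fastforce+

lemma proper_mesh_Q0: "proper_mesh (Q0 M N)"
proof -
  have "open_rect A \<inter> open_rect B = {}" if mem: "A \<in> Q0 M N" "B \<in> Q0 M N" and ne: "A \<noteq> B" for A B
  proof (rule ccontr)
    obtain m n m' n' where A: "A = (real m - 1, 1, real n - 1, 1)"
      and B: "B = (real m' - 1, 1, real n' - 1, 1)"
      using mem unfolding Q0_def by blast
    assume "open_rect A \<inter> open_rect B \<noteq> {}"
    then obtain p s where "(p, s) \<in> open_rect A" "(p, s) \<in> open_rect B" by auto
    then have "real m < real m' + 1" "real m' < real m + 1"
      and "real n < real n' + 1" "real n' < real n + 1"
      using A B by auto
    then have "m = m'" "n = n'" by linarith+
    then show False using ne A B by simp
  qed
  then show ?thesis unfolding proper_mesh_def Q0_def by auto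
qed

lemma bisect_pieces:
  assumes "P \<in> bisect j q (x, a, y, b)" "0 < q" "q < 1" "0 < a" "0 < b"
  shows "0 < fst (snd P) \<and> 0 < snd (snd (snd P))" and "open_rect P \<subseteq> open_rect (x, a, y, b)"
proof -
  have "q * a < a" "q * b < b" "0 < q * a" "0 < q * b" using assms(2-) by simp_all
  then show "0 < fst (snd P) \<and> 0 < snd (snd (snd P))" "open_rect P \<subseteq> open_rect (x, a, y, b)"
    using assms(1) by (cases "j = 1"; auto; linarith)+
qed

lemma bisect_disjoint:
  "P \<in> bisect j q Q \<Longrightarrow> P' \<in> bisect j q Q \<Longrightarrow> P \<noteq> P' \<Longrightarrow> open_rect P \<inter> open_rect P' = {}"
  by (cases Q; cases "j = 1") auto

lemma proper_mesh_bisect: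
  assumes Qs: "proper_mesh Qs" and Q: "Q \<in> Qs" and q: "0 < q" "q < 1"
  shows "proper_mesh ((Qs - {Q}) \<union> bisect j q Q)"
proof -
  obtain x a y b where Q_def: "Q = (x, a, y, b)" by (cases Q)
  have ab: "0 < a" "0 < b" using proper_meshD(1)[OF Qs] Q Q_def by auto
  have pieces: "0 < fst (snd P) \<and> 0 < snd (snd (snd P))" "open_rect P \<subseteq> open_rect Q"
    if "P \<in> bisect j q Q" for P
    using bisect_pieces[of P j q x a y b] that q ab unfolding Q_def by auto
  have old_new: "open_rect A \<inter> open_rect B = {}" if "A \<in> Qs - {Q}" "B \<in> bisect j q Q" for A B
    using proper_meshD(2)[OF Qs, of A Q] pieces(2)[OF that(2)] that(1) Q by blast
  have "open_rect A \<inter> open_rect B = {}"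
    if "A \<in> (Qs - {Q}) \<union> bisect j q Q" "B \<in> (Qs - {Q}) \<union> bisect j q Q" "A \<noteq> B" for A B
    using that proper_meshD(2)[OF Qs, of A B] old_new[of A B] old_new[of B A]
      bisect_disjoint[of A j q Q B] by blast
  moreover have "0 < a' \<and> 0 < b'" if "(x', a', y', b') \<in> (Qs - {Q}) \<union> bisect j q Q" for x' a' y' b'
    using that proper_meshD(1)[OF Qs] pieces(1)[of "(x', a', y', b')"] by auto
  ultimately show ?thesis unfolding proper_mesh_def by blast
qed

lemma proper_mesh_MTS: "Qs \<in> MTS M N \<Longrightarrow> proper_mesh Qs"
  by (induction rule: MTS.induct) (auto intro: proper_mesh_Q0 proper_mesh_bisect)

definition occupies :: "rect \<Rightarrow> real \<times> real \<Rightarrow> real \<times> real \<Rightarrow> bool" where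
  "occupies Q v d \<longleftrightarrow> (\<forall>\<^sub>F t in at_right 0. (fst v + t * fst d, snd v + t * snd d) \<in> open_rect Q)"

definition diagonal_dirs :: "(real \<times> real) set" where
  "diagonal_dirs = {-1, 1} \<times> {-1, 1}"

definition quadrants :: "rect \<Rightarrow> real \<times> real \<Rightarrow> (real \<times> real) set" where
  "quadrants Q v = {d \<in> diagonal_dirs. occupies Q v d}"

definition contains_half_plane :: "(real \<times> real) set \<Rightarrow> bool" where
  "contains_half_plane S \<longleftrightarrow>
     (\<exists>d\<in>{-1, 1}. (d, 1) \<in> S \<and> (d, -1) \<in> S) \<or> (\<exists>d\<in>{-1, 1}. (1, d) \<in> S \<and> (-1, d) \<in> S)"

lemma disjoint_half_planes_cover:
  assumes "contains_half_plane S" "contains_half_plane S'" "S \<inter> S' = {}"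
  shows "diagonal_dirs \<subseteq> S \<union> S'"
  using assms unfolding contains_half_plane_def diagonal_dirs_def by auto

lemma occupies_unique:
  assumes "proper_mesh Qs" "A \<in> Qs" "B \<in> Qs" "occupies A v d" "occupies B v d"
  shows "A = B"
proof (rule ccontr)
  assume "A \<noteq> B"
  then have "open_rect A \<inter> open_rect B = {}" using proper_meshD(2) assms(1-3) by blast
  moreover have "\<forall>\<^sub>F t in at_right 0. (fst v + t * fst d, snd v + t * snd d) \<in> open_rect A \<inter> open_rect B"
    using eventually_conj assms(4,5) unfolding occupies_def by fastforce
  ultimately show False by (simp add: trivial_limit_at_right_real)
qed

lemma quadrants_disjoint:
  "proper_mesh Qs \<Longrightarrow> A \<in> Qs \<Longrightarrow> B \<in> Qs \<Longrightarrow> A \<noteq> B \<Longrightarrow> quadrants A v \<inter> quadrants B v = {}"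
  unfolding quadrants_def using occupies_unique by blast

lemma eventually_enters_interval:
  fixes l u p d :: real
  assumes "l \<le> p" "p \<le> u" "d \<in> {-1, 1}" "p = l \<Longrightarrow> d = 1" "p = u \<Longrightarrow> d = -1"
  shows "\<forall>\<^sub>F t in at_right 0. p + t * d \<in> {l<..<u}"
proof -
  consider "d = 1" "p < u" | "d = -1" "l < p"
    using assms by fastforce
  then obtain e where "0 < e" "\<And>t. t \<in> {0<..<e} \<Longrightarrow> p + t * d \<in> {l<..<u}"
  proof cases
    case 1
    then show ?thesis using assms(1) by (intro that[of "u - p"]) auto
  next
    case 2
    then show ?thesis using assms(2) by (intro that[of "p - l"]) auto
  qed
  then show ?thesis using eventually_at_right_real[OF \<open>0 < e\<close>] by (auto elim: eventually_mono)
qed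

lemma occupiesI:
  assumes "\<forall>\<^sub>F t in at_right 0. p + t * dx \<in> {x<..<x+a}"
    and "\<forall>\<^sub>F t in at_right 0. s + t * dy \<in> {y<..<y+b}"
  shows "occupies (x, a, y, b) (p, s) (dx, dy)"
  using eventually_conj[OF assms] unfolding occupies_def by simp

lemma quadrants_at_vertex:
  assumes "0 < a" "0 < b" "v \<in> verts (x, a, y, b)"
  shows "quadrants (x, a, y, b) v \<noteq> {}"
proof -
  obtain p s where v: "v = (p, s)" by (cases v)
  define dx where "dx = (if p = x then 1 else - 1 :: real)"
  define dy where "dy = (if s = y then 1 else - 1 :: real)"
  have "p = x \<or> p = x + a" "s = y \<or> s = y + b" using assms(3) v by auto
  then have "occupies (x, a, y, b) v (dx, dy)"
    unfolding v dx_def dy_def using assms(1,2)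
    by (intro occupiesI eventually_enters_interval) auto
  then have "(dx, dy) \<in> quadrants (x, a, y, b) v"
    unfolding quadrants_def diagonal_dirs_def dx_def dy_def by simp
  then show ?thesis by blast
qed

lemma quadrants_at_interior_point:
  assumes "v \<in> open_rect Q"
  shows "quadrants Q v = diagonal_dirs"
proof -
  obtain x a y b where Q: "Q = (x, a, y, b)" by (cases Q)
  obtain p s where v: "v = (p, s)" by (cases v)
  have "occupies Q v d" if "d \<in> diagonal_dirs" for d
    using assms that unfolding Q v diagonal_dirs_def
    by (cases d) (auto intro!: occupiesI eventually_enters_interval)
  then show ?thesis unfolding quadrants_def by blast
qed

lemma quadrants_at_side:
  assumes "0 < a" "0 < b" "v \<in> rect_pts (x, a, y, b) - verts (x, a, y, b) - open_rect (x, a, y, b)"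
  shows "contains_half_plane (quadrants (x, a, y, b) v)"
proof -
  obtain p s where v: "v = (p, s)" by (cases v)
  have box: "x \<le> p" "p \<le> x + a" "y \<le> s" "s \<le> y + b" using assms(3) v by auto
  let ?S = "quadrants (x, a, y, b) v"
  consider "p = x \<or> p = x + a" "y < s" "s < y + b" | "s = y \<or> s = y + b" "x < p" "p < x + a"
    using assms(3) v box by fastforce
  then show ?thesis
  proof cases
    case 1
    define d where "d = (if p = x then 1 else - 1 :: real)"
    have d: "d \<in> {-1, 1}" unfolding d_def by simp
    have "occupies (x, a, y, b) v (d, e)" if "e \<in> {-1, 1}" for e
      using 1 assms(1,2) box that unfolding v d_def
      by (auto intro!: occupiesI eventually_enters_interval)
    then have "(d, 1) \<in> ?S" "(d, -1) \<in> ?S" using d unfolding quadrants_def diagonal_dirs_def by auto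
    then show ?thesis using d unfolding contains_half_plane_def by blast
  next
    case 2
    define d where "d = (if s = y then 1 else - 1 :: real)"
    have d: "d \<in> {-1, 1}" unfolding d_def by simp
    have "occupies (x, a, y, b) v (e, d)" if "e \<in> {-1, 1}" for e
      using 2 assms(1,2) box that unfolding v d_def
      by (auto intro!: occupiesI eventually_enters_interval)
    then have "(1, d) \<in> ?S" "(-1, d) \<in> ?S" using d unfolding quadrants_def diagonal_dirs_def by auto
    then show ?thesis using d unfolding contains_half_plane_def by blast
  qed
qed

lemma T_junction_vertex:
  assumes "v \<in> TQ Qs Q"
  obtains R where "R \<in> Qs" "v \<in> verts R" "R \<noteq> Q"
  using assms unfolding TQ_def meshV_def by blast

lemma T_junction_not_interior:
  assumes Qs: "proper_mesh Qs" and Q: "Q \<in> Qs" "v \<in> TQ Qs Q"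
  shows "v \<notin> open_rect Q"
proof
  assume interior: "v \<in> open_rect Q"
  obtain R where R: "R \<in> Qs" "v \<in> verts R" "R \<noteq> Q" using T_junction_vertex[OF Q(2)] .
  obtain x a y b where R_def: "R = (x, a, y, b)" by (cases R)
  have "quadrants R v \<noteq> {}"
    using quadrants_at_vertex proper_meshD(1)[OF Qs] R(1,2) unfolding R_def by blast
  moreover have "quadrants R v \<subseteq> quadrants Q v"
    using quadrants_at_interior_point[OF interior] unfolding quadrants_def by blast
  ultimately show False using quadrants_disjoint[OF Qs R(1) Q(1) R(3)] by blast
qed

lemma T_junction_half_plane:
  assumes Qs: "proper_mesh Qs" and Q: "Q \<in> Qs" "v \<in> TQ Qs Q"
  shows "contains_half_plane (quadrants Q v)"
proof -
  obtain x a y b where Q_def: "Q = (x, a, y, b)" by (cases Q)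
  show ?thesis
    using quadrants_at_side proper_meshD(1)[OF Qs] Q T_junction_not_interior[OF Qs Q]
    unfolding Q_def TQ_def by blast
qed

lemma T_junction_unique:
  assumes Qs: "proper_mesh Qs" and Q: "Q \<in> Qs" "v \<in> TQ Qs Q" and Q': "Q' \<in> Qs" "v \<in> TQ Qs Q'"
  shows "Q = Q'"
proof (rule ccontr)
  assume "Q \<noteq> Q'"
  then have "diagonal_dirs \<subseteq> quadrants Q v \<union> quadrants Q' v"
    using disjoint_half_planes_cover quadrants_disjoint[OF Qs Q(1) Q'(1)]
      T_junction_half_plane[OF Qs Q] T_junction_half_plane[OF Qs Q'] by blast
  moreover obtain R where R: "R \<in> Qs" "v \<in> verts R" "R \<noteq> Q" "R \<noteq> Q'"
    using T_junction_vertex[OF Q(2)] Q'(2) unfolding TQ_def by blast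
  moreover obtain x a y b where "R = (x, a, y, b)" by (cases R)
  ultimately obtain d where "d \<in> quadrants R v" "d \<in> quadrants Q v \<union> quadrants Q' v"
    using quadrants_at_vertex proper_meshD(1)[OF Qs] unfolding quadrants_def by blast
  then show False
    using quadrants_disjoint[OF Qs R(1)] Q(1) Q'(1) R(3,4) by blast
qed

lemma boundary_in_sides:
  assumes "v \<in> rect_pts Q" "v \<notin> open_rect Q"
  shows "v \<in> vsk Q \<or> v \<in> hsk Q"
proof -
  obtain x a y b where Q: "Q = (x, a, y, b)" by (cases Q)
  obtain p s where v: "v = (p, s)" by (cases v)
  have "x \<le> p" "p \<le> x + a" "y \<le> s" "s \<le> y + b" using assms(1) Q v by auto
  moreover have "\<not> (x < p \<and> p < x + a \<and> y < s \<and> s < y + b)" using assms(2) Q v by simp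
  ultimately show ?thesis unfolding Q v by auto
qed

lemma vsk_inter_hsk: "vsk Q \<inter> hsk Q \<subseteq> verts Q"
  by (cases Q) auto

theorem mainTheorem1:
  fixes M N :: nat and Qs :: "rect set"
  assumes "Qs \<in> MTS M N"
  shows "(\<forall>v\<in>Tmesh Qs. \<exists>!Q. Q \<in> Qs \<and> v \<in> TQ Qs Q)
         \<and> Th_mesh Qs \<inter> Tv_mesh Qs = {}
         \<and> Th_mesh Qs \<union> Tv_mesh Qs = Tmesh Qs"
proof -
  have Qs: "proper_mesh Qs" using proper_mesh_MTS[OF assms] .
  note unique = T_junction_unique[OF Qs]
  have "\<forall>v\<in>Tmesh Qs. \<exists>!Q. Q \<in> Qs \<and> v \<in> TQ Qs Q"
    using unique unfolding Tmesh_def by blast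
  moreover have "Th_mesh Qs \<inter> Tv_mesh Qs = {}"
    using unique vsk_inter_hsk unfolding Th_mesh_def Tv_mesh_def ThQ_def TvQ_def TQ_def by blast
  moreover have "v \<in> vsk Q \<or> v \<in> hsk Q" if "Q \<in> Qs" "v \<in> TQ Qs Q" for Q v
    using boundary_in_sides T_junction_not_interior[OF Qs that] that(2) unfolding TQ_def by blast
  then have "Th_mesh Qs \<union> Tv_mesh Qs = Tmesh Qs"
    unfolding Th_mesh_def Tv_mesh_def Tmesh_def ThQ_def TvQ_def by blast
  ultimately show ?thesis by blast
qed

end
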